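(* Let $Q$ be an $[[n,k,d]]$ stabilizer code with codespace projector $P_Q$ whose Shor–Laflamme enumerators satisfy $A_{2i+1}=0$ for all $i$. Then $$\sum_{i=0}^n i\cdot 3^{-i}A_i\le\frac n4\,\frac{2^{n-k}}{3^n}\,B_n.$$
   Context: For an $[[n,k,d]]$ stabilizer code with projector $P_Q$ onto its $2^k$-dimensional codespace, the Shor–Laflamme enumerators are $A_i=\frac{1}{2^{2k}}\sum_{\sigma:w(\sigma)=i}\mathrm{Tr}[\sigma P_Q]\mathrm{Tr}[\sigma^\dagger P_Q]$ and $B_i=\frac{1}{2^k}\sum_{\sigma:w(\sigma)=i}\mathrm{Tr}[\sigma P_Q\sigma^\dagger P_Q]$, where $\sigma$ ranges over the $n$-qubit Pauli operators $\{\mathbb{1},X,Y,Z\}^{\otimes n}$ and $w(\sigma)$ is the number of non-identity tensor factors. *)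

theory Defs
  imports "Jordan_Normal_Form.Schur_Decomposition" "HOL-Library.Complex_Order"
begin

datatype pauli = PI | PX | PY | PZ

definition pauli_mat :: "pauli \<Rightarrow> complex mat" where
  "pauli_mat p = (case p of
      PI \<Rightarrow> mat_of_rows_list 2 [[1, 0], [0, 1]]
    | PX \<Rightarrow> mat_of_rows_list 2 [[0, 1], [1, 0]]
    | PY \<Rightarrow> mat_of_rows_list 2 [[0, - \<i>], [\<i>, 0]]
    | PZ \<Rightarrow> mat_of_rows_list 2 [[1, 0], [0, -1]])"

text \<open>A Pauli string of length n is a list of n single-qubit Paulis; qubit b
  corresponds to bit b of the computational basis index in {0..<2^n}.
  The matrix entry is the product of the single-qubit entries (Kronecker product).\<close>

definition pauli_string_mat :: "nat \<Rightarrow> pauli list \<Rightarrow> complex mat" where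
  "pauli_string_mat n \<sigma> = mat (2^n) (2^n)
     (\<lambda>(r, c). \<Prod>b<n. pauli_mat (\<sigma> ! b) $$ ((r div 2^b) mod 2, (c div 2^b) mod 2))"

definition pauli_strings :: "nat \<Rightarrow> pauli list set" where
  "pauli_strings n = {\<sigma>. length \<sigma> = n}"

definition pweight :: "pauli list \<Rightarrow> nat" where
  "pweight \<sigma> = length (filter (\<lambda>p. p \<noteq> PI) \<sigma>)"

definition pauli_group :: "nat \<Rightarrow> complex mat set" where
  "pauli_group n = {c \<cdot>\<^sub>m pauli_string_mat n \<sigma> | c \<sigma>.
      c \<in> {1, -1, \<i>, -\<i>} \<and> length \<sigma> = n}"

text \<open>A stabilizer group: an abelian subgroup of the n-qubit Pauli group not containing -1.
  (A nonempty finite subset of a group closed under multiplication is a subgroup.)\<close>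
definition stabilizer_group :: "nat \<Rightarrow> complex mat set \<Rightarrow> bool" where
  "stabilizer_group n S \<longleftrightarrow>
     S \<subseteq> pauli_group n \<and> 1\<^sub>m (2^n) \<in> S \<and>
     (\<forall>s\<in>S. \<forall>t\<in>S. s * t \<in> S) \<and>
     (\<forall>s\<in>S. \<forall>t\<in>S. s * t = t * s) \<and>
     - 1\<^sub>m (2^n) \<notin> S"

definition stabilizer_code :: "nat \<Rightarrow> nat \<Rightarrow> complex mat set \<Rightarrow> bool" where
  "stabilizer_code n k S \<longleftrightarrow> k \<le> n \<and> stabilizer_group n S \<and> card S = 2^(n-k)"

definition codespace :: "nat \<Rightarrow> complex mat set \<Rightarrow> complex vec set" where
  "codespace n S = {v \<in> carrier_vec (2^n). \<forall>s\<in>S. s *\<^sub>v v = v}"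

definition orth_projector_onto :: "nat \<Rightarrow> complex mat \<Rightarrow> complex vec set \<Rightarrow> bool" where
  "orth_projector_onto n P V \<longleftrightarrow>
     P \<in> carrier_mat (2^n) (2^n) \<and> P * P = P \<and> mat_adjoint P = P \<and>
     (\<lambda>v. P *\<^sub>v v) ` carrier_vec (2^n) = V"

definition mtrace :: "complex mat \<Rightarrow> complex" where
  "mtrace A = (\<Sum>i<dim_row A. A $$ (i, i))"

definition SL_A :: "nat \<Rightarrow> nat \<Rightarrow> complex mat \<Rightarrow> nat \<Rightarrow> complex" where
  "SL_A n k P i = 1 / 2^(2*k) *
     (\<Sum>\<sigma>\<in>{\<sigma>\<in>pauli_strings n. pweight \<sigma> = i}.
        mtrace (pauli_string_mat n \<sigma> * P) * mtrace (mat_adjoint (pauli_string_mat n \<sigma>) * P))"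

definition SL_B :: "nat \<Rightarrow> nat \<Rightarrow> complex mat \<Rightarrow> nat \<Rightarrow> complex" where
  "SL_B n k P i = 1 / 2^k *
     (\<Sum>\<sigma>\<in>{\<sigma>\<in>pauli_strings n. pweight \<sigma> = i}.
        mtrace (pauli_string_mat n \<sigma> * P * mat_adjoint (pauli_string_mat n \<sigma>) * P))"

end

theory Submission
  imports Defs
begin

(*
  Write s_\<sigma> for the matrix of a Pauli string \<sigma> and, for a box \<T> = T_0 \<times> ... \<times> T_(n-1) of
  strings, \<chi>_\<T>(\<tau>) = \<Prod>_l \<Sum>_(p \<in> T_l) (+1 or -1 as p and \<tau>_l commute or anticommute).
  Expanding traces entrywise and using a single-qubit identity on each tensor factor gives

    2^n \<Sum>_(\<sigma> \<in> \<T>) tr (s_\<sigma> A s_\<sigma> B) = \<Sum>_\<tau> \<chi>_\<T>(\<tau>) tr (s_\<tau> A) tr (s_\<tau> B).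

  For \<T> = {X,Y,Z}^n this expresses B_n through the sums defining the A_i, with weight
  3^n (-1/3)^wt(\<tau>). As the odd A_i vanish, (1/3)^i may be replaced by (-1/3)^i on the left,
  and the difference of the two sides becomes a positive multiple of
  \<Sum>_\<tau> (n - 4 wt(\<tau>)) (-1/3)^wt(\<tau>) tr (s_\<tau> P)^2. Summed over the n boxes having the identity
  at exactly one position, the identity produces this weight times 3^(n-1), so the difference is
  a nonnegative combination of the terms tr (s_\<sigma> P s_\<sigma> P) = tr ((P s_\<sigma> P)^2) \<ge> 0.
*)

lemma UNIV_pauli: "(UNIV :: pauli set) = {PI, PX, PY, PZ}"
  using pauli.exhaust by auto

instance pauli :: finite
  by standard (subst UNIV_pauli, simp)

definition pauli_entry :: "pauli \<Rightarrow> nat \<Rightarrow> nat \<Rightarrow> complex" where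
  "pauli_entry p x y = (case p of
      PI \<Rightarrow> (if x = y then 1 else 0)
    | PX \<Rightarrow> (if x \<noteq> y then 1 else 0)
    | PY \<Rightarrow> (if x = y then 0 else if x = 0 then - \<i> else \<i>)
    | PZ \<Rightarrow> (if x \<noteq> y then 0 else if x = 0 then 1 else -1))"

lemma pauli_mat_index: "x < 2 \<Longrightarrow> y < 2 \<Longrightarrow> pauli_mat p $$ (x, y) = pauli_entry p x y"
  by (drule less_2_cases)+ (cases p; auto simp: pauli_mat_def pauli_entry_def mat_of_rows_list_def)

lemma cnj_pauli_entry: "x < 2 \<Longrightarrow> y < 2 \<Longrightarrow> cnj (pauli_entry p y x) = pauli_entry p x y"
  by (drule less_2_cases)+ (cases p; auto simp: pauli_entry_def)

definition qubit_val :: "nat \<Rightarrow> nat \<Rightarrow> nat" where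
  "qubit_val l r = r div 2 ^ l mod 2"

lemma qubit_val_less: "qubit_val l r < 2"
  by (simp add: qubit_val_def)

lemma pauli_string_mat_carrier [simp]: "pauli_string_mat n \<sigma> \<in> carrier_mat (2^n) (2^n)"
  by (simp add: pauli_string_mat_def)

lemma dim_pauli_string_mat [simp]:
  "dim_row (pauli_string_mat n \<sigma>) = 2^n" "dim_col (pauli_string_mat n \<sigma>) = 2^n"
  by (simp_all add: pauli_string_mat_def)

lemma pauli_string_mat_index:
  "r < 2^n \<Longrightarrow> c < 2^n \<Longrightarrow>
   pauli_string_mat n \<sigma> $$ (r, c) = (\<Prod>l<n. pauli_entry (\<sigma> ! l) (qubit_val l r) (qubit_val l c))"
  by (simp add: pauli_string_mat_def qubit_val_def pauli_mat_index)

lemma dim_mat_adjoint [simp]: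
  "dim_row (mat_adjoint A) = dim_col A" "dim_col (mat_adjoint A) = dim_row A"
  by (simp_all add: mat_adjoint_def mat_of_rows_def)

lemma mat_adjoint_index:
  "i < dim_col A \<Longrightarrow> j < dim_row A \<Longrightarrow> mat_adjoint A $$ (i, j) = cnj (A $$ (j, i))"
  by (simp add: mat_adjoint_def mat_of_rows_def)

lemma mat_adjoint_pauli_string_mat: "mat_adjoint (pauli_string_mat n \<sigma>) = pauli_string_mat n \<sigma>"
  by (rule eq_matI)
     (simp_all add: mat_adjoint_index pauli_string_mat_index cnj_pauli_entry qubit_val_less)

definition pauli_strings_in :: "nat \<Rightarrow> (nat \<Rightarrow> pauli set) \<Rightarrow> pauli list set" where
  "pauli_strings_in n T = {\<sigma>. length \<sigma> = n \<and> (\<forall>l<n. \<sigma> ! l \<in> T l)}"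

lemma pauli_strings_eq_pauli_strings_in: "pauli_strings n = pauli_strings_in n (\<lambda>_. UNIV)"
  by (simp add: pauli_strings_def pauli_strings_in_def)

lemma sum_prod_pauli_strings_in:
  fixes f :: "nat \<Rightarrow> pauli \<Rightarrow> 'a :: comm_semiring_1"
  shows "(\<Sum>\<sigma>\<in>pauli_strings_in n T. \<Prod>l<n. f l (\<sigma> ! l)) = (\<Prod>l<n. \<Sum>p\<in>T l. f l p)"
proof -
  have "(\<Prod>l<n. \<Sum>p\<in>T l. f l p) = (\<Sum>g\<in>PiE {..<n} T. \<Prod>l<n. f l (g l))"
    by (rule prod_sum_PiE) auto
  also have "\<dots> = (\<Sum>\<sigma>\<in>pauli_strings_in n T. \<Prod>l<n. f l (\<sigma> ! l))"
    by (rule sum.reindex_bij_witness[of _ "\<lambda>\<sigma> l. if l < n then \<sigma> ! l else undefined"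
                                          "\<lambda>g. map g [0..<n]"])
       (auto simp: pauli_strings_in_def PiE_def extensional_def intro: nth_equalityI)
  finally show ?thesis ..
qed

definition commute_sign :: "pauli \<Rightarrow> pauli \<Rightarrow> complex" where
  "commute_sign p q = (if p = PI \<or> q = PI \<or> p = q then 1 else -1)"

definition commutation_sum :: "pauli set \<Rightarrow> pauli \<Rightarrow> complex" where
  "commutation_sum T q = (\<Sum>p\<in>T. commute_sign p q)"

lemma pauli_entry_product_swap:
  "a < 2 \<Longrightarrow> b < 2 \<Longrightarrow> c < 2 \<Longrightarrow> d < 2 \<Longrightarrow>
   2 * (pauli_entry p a b * pauli_entry p c d)
     = (\<Sum>q\<in>UNIV. commute_sign p q * pauli_entry q c b * pauli_entry q a d)"
  by (drule less_2_cases)+ (cases p; auto simp: UNIV_pauli pauli_entry_def commute_sign_def)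

lemma sum_pauli_entry_product_swap:
  assumes "a < 2" "b < 2" "c < 2" "d < 2"
  shows "2 * (\<Sum>p\<in>T. pauli_entry p a b * pauli_entry p c d)
     = (\<Sum>q\<in>UNIV. commutation_sum T q * pauli_entry q c b * pauli_entry q a d)"
proof -
  have "2 * (\<Sum>p\<in>T. pauli_entry p a b * pauli_entry p c d)
      = (\<Sum>p\<in>T. \<Sum>q\<in>UNIV. commute_sign p q * pauli_entry q c b * pauli_entry q a d)"
    by (simp add: sum_distrib_left pauli_entry_product_swap assms)
  also have "\<dots> = (\<Sum>q\<in>UNIV. commutation_sum T q * pauli_entry q c b * pauli_entry q a d)"
    by (subst sum.swap) (simp add: commutation_sum_def sum_distrib_right)
  finally show ?thesis .
qed

lemma sum_pauli_string_entry_product_swap: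
  assumes "i < 2^n" "c < 2^n" "r < 2^n" "d < 2^n"
  shows "2^n * (\<Sum>\<sigma>\<in>pauli_strings_in n T.
                  pauli_string_mat n \<sigma> $$ (i, c) * pauli_string_mat n \<sigma> $$ (r, d))
       = (\<Sum>\<tau>\<in>pauli_strings n. (\<Prod>l<n. commutation_sum (T l) (\<tau> ! l)) *
                  pauli_string_mat n \<tau> $$ (r, c) * pauli_string_mat n \<tau> $$ (i, d))"
proof -
  let ?e = "\<lambda>p l x y. pauli_entry p (qubit_val l x) (qubit_val l y)"
  have "2^n * (\<Sum>\<sigma>\<in>pauli_strings_in n T.
                  pauli_string_mat n \<sigma> $$ (i, c) * pauli_string_mat n \<sigma> $$ (r, d))
      = (\<Prod>l<n. 2 * (\<Sum>p\<in>T l. ?e p l i c * ?e p l r d))"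
    by (simp add: pauli_string_mat_index assms prod.distrib flip: sum_prod_pauli_strings_in)
  also have "\<dots> = (\<Prod>l<n. \<Sum>q\<in>UNIV. commutation_sum (T l) q * ?e q l r c * ?e q l i d)"
    by (simp add: sum_pauli_entry_product_swap qubit_val_less)
  also have "\<dots> = (\<Sum>\<tau>\<in>pauli_strings n. (\<Prod>l<n. commutation_sum (T l) (\<tau> ! l)) *
                  pauli_string_mat n \<tau> $$ (r, c) * pauli_string_mat n \<tau> $$ (i, d))"
    by (simp add: pauli_string_mat_index assms prod.distrib pauli_strings_eq_pauli_strings_in
        flip: sum_prod_pauli_strings_in)
  finally show ?thesis .
qed

lemma mtrace_mult:
  "A \<in> carrier_mat N N \<Longrightarrow> B \<in> carrier_mat N N \<Longrightarrow>
   mtrace (A * B) = (\<Sum>i<N. \<Sum>j<N. A $$ (i, j) * B $$ (j, i))"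
  by (simp add: mtrace_def index_mult_mat scalar_prod_def atLeast0LessThan)

lemma mtrace_mult_commute:
  "A \<in> carrier_mat N N \<Longrightarrow> B \<in> carrier_mat N N \<Longrightarrow> mtrace (A * B) = mtrace (B * A)"
  by (simp add: mtrace_mult[of _ N] mult.commute) (rule sum.swap)

lemma mtrace_mult4:
  assumes "A \<in> carrier_mat N N" "B \<in> carrier_mat N N" "C \<in> carrier_mat N N" "D \<in> carrier_mat N N"
  shows "mtrace (A * B * C * D)
    = (\<Sum>i<N. \<Sum>d<N. \<Sum>c<N. \<Sum>r<N. A $$ (i, c) * B $$ (c, r) * C $$ (r, d) * D $$ (d, i))"
  using assms
  by (simp add: mtrace_mult[of _ N] index_mult_mat scalar_prod_def atLeast0LessThan
      sum_distrib_left sum_distrib_right mult.assoc)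

lemma sum_mtrace_pauli_conj:
  assumes A: "A \<in> carrier_mat (2^n) (2^n)" and B: "B \<in> carrier_mat (2^n) (2^n)"
  shows "2^n * (\<Sum>\<sigma>\<in>pauli_strings_in n T.
                  mtrace (pauli_string_mat n \<sigma> * A * pauli_string_mat n \<sigma> * B))
       = (\<Sum>\<tau>\<in>pauli_strings n. (\<Prod>l<n. commutation_sum (T l) (\<tau> ! l)) *
                  mtrace (pauli_string_mat n \<tau> * A) * mtrace (pauli_string_mat n \<tau> * B))"
proof -
  let ?N = "2^n :: nat" and ?s = "pauli_string_mat n"
  let ?w = "\<lambda>\<tau>. \<Prod>l<n. commutation_sum (T l) (\<tau> ! l)"
  have "2^n * (\<Sum>\<sigma>\<in>pauli_strings_in n T. mtrace (?s \<sigma> * A * ?s \<sigma> * B))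
      = (\<Sum>i<?N. \<Sum>d<?N. \<Sum>c<?N. \<Sum>r<?N. A $$ (c, r) * B $$ (d, i) *
           (2^n * (\<Sum>\<sigma>\<in>pauli_strings_in n T. ?s \<sigma> $$ (i, c) * ?s \<sigma> $$ (r, d))))"
    using A B
    by (simp add: mtrace_mult4[of _ ?N] sum_distrib_left sum.swap[of _ "pauli_strings_in n T"]
        mult_ac)
  also have "\<dots> = (\<Sum>i<?N. \<Sum>d<?N. \<Sum>c<?N. \<Sum>r<?N. A $$ (c, r) * B $$ (d, i) *
           (\<Sum>\<tau>\<in>pauli_strings n. ?w \<tau> * ?s \<tau> $$ (r, c) * ?s \<tau> $$ (i, d)))"
    by (simp add: sum_pauli_string_entry_product_swap)
  \<comment> \<open>the summation order of \<open>mtrace_mult4\<close> is that of tr (s_\<tau> B) tr (A s_\<tau>)\<close>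
  also have "\<dots> = (\<Sum>\<tau>\<in>pauli_strings n. ?w \<tau> * mtrace (?s \<tau> * B) * mtrace (A * ?s \<tau>))"
    using A B
    by (simp add: mtrace_mult[of _ ?N] sum_distrib_left sum_distrib_right
        sum.swap[of _ "pauli_strings n"] mult_ac)
  also have "\<dots> = (\<Sum>\<tau>\<in>pauli_strings n. ?w \<tau> * mtrace (?s \<tau> * A) * mtrace (?s \<tau> * B))"
    using A by (simp add: mtrace_mult_commute[of A ?N] mult_ac)
  finally show ?thesis .
qed

lemma mat_adjoint_mult:
  fixes A B :: "complex mat"
  assumes "A \<in> carrier_mat N M" "B \<in> carrier_mat M K"
  shows "mat_adjoint (A * B) = mat_adjoint B * mat_adjoint A"
  by (rule eq_matI)
     (use assms in \<open>simp_all add: mat_adjoint_index index_mult_mat scalar_prod_def mult.commute\<close>)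

lemma mtrace_mult_adjoint_nonneg:
  assumes "A \<in> carrier_mat N M"
  shows "0 \<le> mtrace (A * mat_adjoint A)"
proof -
  have "mtrace (A * mat_adjoint A) = (\<Sum>i<N. \<Sum>j<M. A $$ (i, j) * cnj (A $$ (i, j)))"
    using assms
    by (simp add: mtrace_def index_mult_mat scalar_prod_def atLeast0LessThan mat_adjoint_index)
  also have "0 \<le> \<dots>"
    by (intro sum_nonneg) (simp add: complex_mult_cnj less_eq_complex_def)
  finally show ?thesis .
qed

lemma mtrace_conj_projector_nonneg:
  fixes S P :: "complex mat"
  assumes S: "S \<in> carrier_mat N N" "mat_adjoint S = S"
    and P: "P \<in> carrier_mat N N" "P * P = P" "mat_adjoint P = P"
  shows "0 \<le> mtrace (S * P * S * P)"
proof -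
  let ?Y = "P * S * P"
  have idem: "P * (P * X) = P * X" if "X \<in> carrier_mat N N" for X
    using P that by (metis assoc_mult_mat)
  have "mtrace (S * P * S * P) = mtrace (S * P * S * P * P)"
    using S P by (simp add: assoc_mult_mat[of _ N N _ N _ N])
  also have "\<dots> = mtrace (P * (S * P * S * P))"
    using S P by (intro mtrace_mult_commute[of _ N]) auto
  also have "\<dots> = mtrace (?Y * ?Y)"
    using S P by (simp add: assoc_mult_mat[of _ N N _ N _ N] idem)
  also have "\<dots> = mtrace (?Y * mat_adjoint ?Y)"
    using S P by (simp add: mat_adjoint_mult[of _ N N _ N])
  finally show ?thesis
    using P S by (simp add: mtrace_mult_adjoint_nonneg[of _ N N])
qed

lemma finite_pauli_strings: "finite (pauli_strings n)"
  using finite_lists_length_eq[of "UNIV :: pauli set" n] by (simp add: pauli_strings_def)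

lemma pweight_le_length: "pweight \<sigma> \<le> length \<sigma>"
  unfolding pweight_def by (rule length_filter_le)

lemma pweight_Cons: "pweight (p # \<sigma>) = (if p = PI then 0 else 1) + pweight \<sigma>"
  by (simp add: pweight_def)

lemma full_weight_pauli_strings:
  "{\<sigma> \<in> pauli_strings n. pweight \<sigma> = n} = pauli_strings_in n (\<lambda>_. {PX, PY, PZ})"
proof -
  have "pweight \<sigma> = length \<sigma> \<longleftrightarrow> (\<forall>l<length \<sigma>. \<sigma> ! l \<noteq> PI)" for \<sigma>
    unfolding pweight_def using length_filter_less[of _ \<sigma> "\<lambda>p. p \<noteq> PI"]
    by (fastforce simp: all_set_conv_all_nth)
  moreover have "q \<in> {PX, PY, PZ} \<longleftrightarrow> q \<noteq> PI" for q
    by (cases q) auto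
  ultimately show ?thesis
    by (auto simp: pauli_strings_def pauli_strings_in_def)
qed

definition identity_only_at :: "nat \<Rightarrow> nat \<Rightarrow> pauli set" where
  "identity_only_at j l = (if l = j then {PI} else {PX, PY, PZ})"

lemma commutation_sum_XYZ: "commutation_sum {PX, PY, PZ} q = (if q = PI then 3 else -1)"
  by (cases q) (simp_all add: commutation_sum_def commute_sign_def)

lemma commutation_sum_I: "commutation_sum {PI} q = 1"
  by (simp add: commutation_sum_def commute_sign_def)

lemma prod_commutation_sum_XYZ:
  "length \<tau> = n \<Longrightarrow>
   (\<Prod>l<n. commutation_sum {PX, PY, PZ} (\<tau> ! l)) = 3 ^ n * (-1/3) ^ pweight \<tau>"
proof (induction \<tau> arbitrary: n)
  case Nil
  then show ?case by (simp add: pweight_def)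
next
  case (Cons p \<tau>)
  then show ?case
    by (cases "p = PI")
       (auto simp: prod.lessThan_Suc_shift pweight_Cons commutation_sum_XYZ
         simp del: prod.lessThan_Suc)
qed

lemma sum_inverse_commutation_sum_XYZ:
  "length \<tau> = n \<Longrightarrow>
   3 * (\<Sum>j<n. inverse (commutation_sum {PX, PY, PZ} (\<tau> ! j)))
     = of_nat n - 4 * of_nat (pweight \<tau>)"
proof (induction \<tau> arbitrary: n)
  case Nil
  then show ?case by (simp add: pweight_def)
next
  case (Cons p \<tau>)
  then show ?case
    by (cases "p = PI")
       (auto simp: sum.lessThan_Suc_shift pweight_Cons commutation_sum_XYZ algebra_simps
         simp del: sum.lessThan_Suc)
qed

lemma prod_commutation_sum_identity_only_at:
  assumes "j < n"
  shows "(\<Prod>l<n. commutation_sum (identity_only_at j l) (\<tau> ! l))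
    = (\<Prod>l<n. commutation_sum {PX, PY, PZ} (\<tau> ! l))
        * inverse (commutation_sum {PX, PY, PZ} (\<tau> ! j))"
  using assms
  by (simp add: prod.remove[of "{..<n}" j] identity_only_at_def commutation_sum_I
      commutation_sum_XYZ)

lemma sum_prod_commutation_sum_identity_only_at:
  "length \<tau> = n \<Longrightarrow>
   3 * (\<Sum>j<n. \<Prod>l<n. commutation_sum (identity_only_at j l) (\<tau> ! l))
     = 3 ^ n * (-1/3) ^ pweight \<tau> * (of_nat n - 4 * of_nat (pweight \<tau>))"
  by (simp add: prod_commutation_sum_identity_only_at prod_commutation_sum_XYZ
      flip: sum_distrib_left sum_inverse_commutation_sum_XYZ)

lemma nonneg_of_real_mult_iff: "0 < c \<Longrightarrow> 0 \<le> complex_of_real c * x \<longleftrightarrow> 0 \<le> x"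
  by (simp add: less_eq_complex_def zero_le_mult_iff)

lemma sum_weighted_SL_A:
  "2^(2*k) * (\<Sum>i=0..n. F i * SL_A n k P i)
     = (\<Sum>\<sigma>\<in>pauli_strings n. F (pweight \<sigma>) * mtrace (pauli_string_mat n \<sigma> * P)^2)"
proof -
  have "2^(2*k) * (\<Sum>i=0..n. F i * SL_A n k P i)
      = (\<Sum>i=0..n. \<Sum>\<sigma>\<in>{\<sigma>\<in>pauli_strings n. pweight \<sigma> = i}.
           F (pweight \<sigma>) * mtrace (pauli_string_mat n \<sigma> * P)^2)"
    by (simp add: SL_A_def mat_adjoint_pauli_string_mat power2_eq_square sum_distrib_left)
  also have "\<dots> = (\<Sum>\<sigma>\<in>pauli_strings n. F (pweight \<sigma>) * mtrace (pauli_string_mat n \<sigma> * P)^2)"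
    using pweight_le_length by (intro sum.group finite_pauli_strings) (auto simp: pauli_strings_def)
  finally show ?thesis .
qed

lemma SL_B_full_weight:
  assumes "P \<in> carrier_mat (2^n) (2^n)"
  shows "2^n * 2^k * SL_B n k P n
     = (\<Sum>\<sigma>\<in>pauli_strings n. 3^n * (-1/3) ^ pweight \<sigma> * mtrace (pauli_string_mat n \<sigma> * P)^2)"
proof -
  have "2^n * 2^k * SL_B n k P n = 2^n * (\<Sum>\<sigma>\<in>pauli_strings_in n (\<lambda>_. {PX, PY, PZ}).
          mtrace (pauli_string_mat n \<sigma> * P * pauli_string_mat n \<sigma> * P))"
    by (simp add: SL_B_def full_weight_pauli_strings mat_adjoint_pauli_string_mat)
  also have "\<dots> = (\<Sum>\<sigma>\<in>pauli_strings n.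
                       3^n * (-1/3) ^ pweight \<sigma> * mtrace (pauli_string_mat n \<sigma> * P)^2)"
    by (simp add: sum_mtrace_pauli_conj assms pauli_strings_def prod_commutation_sum_XYZ
        power2_eq_square mult_ac)
  finally show ?thesis .
qed

lemma sum_weight_deficit_nonneg:
  assumes P: "P \<in> carrier_mat (2^n) (2^n)" "P * P = P" "mat_adjoint P = P"
  shows "0 \<le> (\<Sum>\<sigma>\<in>pauli_strings n. (of_nat n - 4 * of_nat (pweight \<sigma>)) * (-1/3) ^ pweight \<sigma>
                   * mtrace (pauli_string_mat n \<sigma> * P)^2)"
proof -
  let ?s = "pauli_string_mat n"
  let ?\<chi> = "\<lambda>j \<tau>. \<Prod>l<n. commutation_sum (identity_only_at j l) (\<tau> ! l)"
  have weight: "3^n * ((of_nat n - 4 * of_nat (pweight \<tau>)) * (-1/3) ^ pweight \<tau>)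
      = 3 * (\<Sum>j<n. ?\<chi> j \<tau>)" if "\<tau> \<in> pauli_strings n" for \<tau>
    using sum_prod_commutation_sum_identity_only_at[of \<tau> n] that
    by (simp add: pauli_strings_def mult_ac)
  have "3^n * (\<Sum>\<sigma>\<in>pauli_strings n. (of_nat n - 4 * of_nat (pweight \<sigma>)) * (-1/3) ^ pweight \<sigma>
                   * mtrace (?s \<sigma> * P)^2)
      = (\<Sum>\<tau>\<in>pauli_strings n. 3^n * ((of_nat n - 4 * of_nat (pweight \<tau>)) * (-1/3) ^ pweight \<tau>)
                   * mtrace (?s \<tau> * P) * mtrace (?s \<tau> * P))"
    by (simp add: sum_distrib_left power2_eq_square mult_ac)
  also have "\<dots> = (\<Sum>\<tau>\<in>pauli_strings n.
                       3 * (\<Sum>j<n. ?\<chi> j \<tau>) * mtrace (?s \<tau> * P) * mtrace (?s \<tau> * P))"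
    by (rule sum.cong) (simp_all only: weight)
  also have "\<dots> = 3 * (\<Sum>j<n. \<Sum>\<tau>\<in>pauli_strings n.
                           ?\<chi> j \<tau> * mtrace (?s \<tau> * P) * mtrace (?s \<tau> * P))"
    by (subst sum.swap) (simp add: sum_distrib_left sum_distrib_right mult_ac)
  also have "\<dots> = 3 * (\<Sum>j<n. 2^n * (\<Sum>\<sigma>\<in>pauli_strings_in n (identity_only_at j).
                        mtrace (?s \<sigma> * P * ?s \<sigma> * P)))"
    by (simp add: sum_mtrace_pauli_conj P)
  also have "0 \<le> \<dots>"
    using P by (intro mult_nonneg_nonneg sum_nonneg mtrace_conj_projector_nonneg[of _ "2^n"])
      (simp_all add: mat_adjoint_pauli_string_mat less_eq_complex_def)
  finally show ?thesis
    using nonneg_of_real_mult_iff[of "3^n"] by simp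
qed

lemma enumerator_gap_eq:
  assumes "k \<le> n" and P: "P \<in> carrier_mat (2^n) (2^n)"
  shows "4 * 2^(2*k) * (of_nat n / 4 * (2^(n-k) / 3^n) * SL_B n k P n
                          - (\<Sum>i=0..n. of_nat i * (-1/3) ^ i * SL_A n k P i))
    = (\<Sum>\<sigma>\<in>pauli_strings n. (of_nat n - 4 * of_nat (pweight \<sigma>)) * (-1/3) ^ pweight \<sigma>
                               * mtrace (pauli_string_mat n \<sigma> * P)^2)"
proof -
  let ?a = "\<lambda>\<sigma>. mtrace (pauli_string_mat n \<sigma> * P)^2"
  have "(2::complex)^(2*k) * 2^(n-k) = 2^n * 2^k"
    using \<open>k \<le> n\<close> by (simp add: add.commute flip: power_add)
  then have "4 * 2^(2*k) * (of_nat n / 4 * (2^(n-k) / 3^n) * SL_B n k P n)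
      = of_nat n / 3^n * (2^n * 2^k * SL_B n k P n)"
    by (simp add: field_simps)
  also have "\<dots> = (\<Sum>\<sigma>\<in>pauli_strings n. of_nat n * (-1/3) ^ pweight \<sigma> * ?a \<sigma>)"
    unfolding SL_B_full_weight[OF P] by (simp add: sum_distrib_left field_simps)
  finally have B: "4 * 2^(2*k) * (of_nat n / 4 * (2^(n-k) / 3^n) * SL_B n k P n)
      = (\<Sum>\<sigma>\<in>pauli_strings n. of_nat n * (-1/3) ^ pweight \<sigma> * ?a \<sigma>)" .
  have A: "4 * 2^(2*k) * (\<Sum>i=0..n. of_nat i * (-1/3) ^ i * SL_A n k P i)
      = (\<Sum>\<sigma>\<in>pauli_strings n. 4 * of_nat (pweight \<sigma>) * (-1/3) ^ pweight \<sigma> * ?a \<sigma>)"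
    unfolding mult.assoc[of 4] sum_weighted_SL_A by (simp add: sum_distrib_left mult.assoc)
  show ?thesis
    unfolding right_diff_distrib A B by (simp add: algebra_simps flip: sum_subtractf)
qed

theorem proposition7:
  fixes n k :: nat and S :: "complex mat set" and P :: "complex mat"
  assumes "stabilizer_code n k S"
    and "orth_projector_onto n P (codespace n S)"
    and "\<forall>i. SL_A n k P (2 * i + 1) = 0"
  shows "(\<Sum>i=0..n. of_nat i * (1 / 3 ^ i) * SL_A n k P i)
           \<le> of_nat n / 4 * (2 ^ (n - k) / 3 ^ n) * SL_B n k P n"
proof -
  have "k \<le> n"
    using assms(1) by (simp add: stabilizer_code_def)
  have P: "P \<in> carrier_mat (2^n) (2^n)" "P * P = P" "mat_adjoint P = P"
    using assms(2) by (auto simp: orth_projector_onto_def)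
  have signed: "of_nat i * (1 / 3 ^ i) * SL_A n k P i = of_nat i * (-1/3) ^ i * SL_A n k P i" for i
    using assms(3) by (cases "even i") (auto simp: power_divide elim: oddE)
  let ?gap = "of_nat n / 4 * (2 ^ (n - k) / 3 ^ n) * SL_B n k P n
                - (\<Sum>i=0..n. of_nat i * (1 / 3 ^ i) * SL_A n k P i)"
  have "0 \<le> 4 * 2^(2*k) * ?gap"
    unfolding signed enumerator_gap_eq[OF \<open>k \<le> n\<close> P(1)] by (rule sum_weight_deficit_nonneg[OF P])
  then have "0 \<le> ?gap"
    using nonneg_of_real_mult_iff[of "4 * 2^(2*k)" ?gap] by simp
  then show ?thesis
    by simp
qed

end
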